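(* Let $L>0,\alpha>0$. For any $b\in\Lambda(\alpha)$ and any $\psi\in E_L$, $\int_{[0,L)}\psi'(x)^2dx-\int_{[0,L)}b(x)\psi(x)^2dx\ge-(\alpha+\alpha^2L^2)\int_{[0,L)}\psi(x)^2dx$.
   Context: $\Lambda(\alpha)$: $b\in C^1(\mathbb R)$, $b\ge0$, $L$-periodic, $\int_0^Lb=\alpha L$. $H^1_{per}=\{\varphi\in H^1_{loc}(\mathbb R):\varphi(x+L)=\varphi(x)\}$ and $E_L=\{\psi\in H^1_{per}:\psi(x)>0 \text{ for all }x\}$. *)

theory Defs
  imports "HOL-Analysis.Analysis"
begin

definition Lambda :: "real \<Rightarrow> real \<Rightarrow> (real \<Rightarrow> real) set" where
  "Lambda L \<alpha> = {b. b C1_differentiable_on UNIV \<and> (\<forall>x. b x \<ge> 0) \<and>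
      (\<forall>x. b (x + L) = b x) \<and> (LINT x:{0..L}|lborel. b x) = \<alpha> * L}"

text \<open>H^1_loc(R) in one dimension: psi is (the continuous representative of) an H^1_loc
  function with weak derivative dpsi, i.e. dpsi and psi are locally square integrable and
  psi is the indefinite integral of dpsi (local absolute continuity).\<close>
definition H1_loc :: "(real \<Rightarrow> real) \<Rightarrow> (real \<Rightarrow> real) \<Rightarrow> bool" where
  "H1_loc \<psi> d\<psi> \<longleftrightarrow>
     (\<forall>a b. set_integrable lborel {a..b} d\<psi> \<and>
            set_integrable lborel {a..b} (\<lambda>x. (d\<psi> x)\<^sup>2) \<and>
            set_integrable lborel {a..b} (\<lambda>x. (\<psi> x)\<^sup>2) \<and>
            (a \<le> b \<longrightarrow> \<psi> b - \<psi> a = (LINT x:{a..b}|lborel. d\<psi> x)))"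

definition H1_per :: "real \<Rightarrow> (real \<Rightarrow> real) \<Rightarrow> (real \<Rightarrow> real) \<Rightarrow> bool" where
  "H1_per L \<psi> d\<psi> \<longleftrightarrow> H1_loc \<psi> d\<psi> \<and> (\<forall>x. \<psi> (x + L) = \<psi> x)"

definition E_L :: "real \<Rightarrow> (real \<Rightarrow> real) \<Rightarrow> (real \<Rightarrow> real) \<Rightarrow> bool" where
  "E_L L \<psi> d\<psi> \<longleftrightarrow> H1_per L \<psi> d\<psi> \<and> (\<forall>x. \<psi> x > 0)"

end

theory Submission
  imports Defs
begin

text \<open>For x, y in a period, \<psi>(x)^2 - \<psi>(y)^2 is the integral of 2\<psi>\<psi>' between them, so
  \<psi>(x)^2 \<le> \<psi>(y)^2 + J with J = \<integral> 2\<psi>|\<psi>'| over the period. Multiplying by b, integrating in x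
  and averaging in y gives \<integral> b\<psi>^2 \<le> \<alpha>\<integral>\<psi>^2 + \<alpha>LJ, and the pointwise inequality
  2\<alpha>L\<psi>|\<psi>'| \<le> \<alpha>^2L^2\<psi>^2 + \<psi>'^2 bounds \<alpha>LJ by \<alpha>^2L^2\<integral>\<psi>^2 + \<integral>\<psi>'^2.
  For an H^1 function the product rule is available only in discretised form: on a mesh of
  width h it holds up to an error 2h\<integral>\<psi>'^2, which vanishes as h \<rightarrow> 0.\<close>

lemma borel_measurable_if_set_integrable_Icc:
  fixes f :: "real \<Rightarrow> real"
  assumes "\<And>a b. set_integrable lborel {a..b} f"
  shows "f \<in> borel_measurable lborel"
proof (rule borel_measurable_LIMSEQ_real)
  show "(\<lambda>x. indicator {- real i..real i} x *\<^sub>R f x) \<in> borel_measurable lborel" for i :: nat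
    using assms unfolding set_integrable_def by (blast intro: borel_measurable_integrable)
  show "(\<lambda>i. indicator {- real i..real i} x *\<^sub>R f x) \<longlonglongrightarrow> f x" for x
  proof (rule tendsto_eventually)
    obtain n where "\<bar>x\<bar> \<le> real n" using real_arch_simple by blast
    then show "\<forall>\<^sub>F i in sequentially. indicator {- real i..real i} x *\<^sub>R f x = f x"
      unfolding eventually_sequentially by (intro exI[of _ n]) (auto simp: indicator_def)
  qed
qed

lemma set_integral_nonneg:
  fixes f :: "'a \<Rightarrow> real"
  assumes "\<And>x. x \<in> A \<Longrightarrow> 0 \<le> f x"
  shows "0 \<le> (LINT x:A|M. f x)"
  unfolding set_lebesgue_integral_def by (rule Bochner_Integration.integral_nonneg) (simp add: assms indicator_def)

lemma set_integral_singleton [simp]: "(LINT x:{a::real}|lborel. f x) = (0::real)"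
  unfolding set_lebesgue_integral_def
  by (rule integral_eq_zero_AE) (use AE_lborel_singleton[of a] in \<open>eventually_elim, auto simp: indicator_def\<close>)

lemma set_integral_Icc_split:
  fixes f :: "real \<Rightarrow> real"
  assumes "set_integrable lborel {a..c} f" "a \<le> m" "m \<le> c"
  shows "(LINT x:{a..c}|lborel. f x) = (LINT x:{a..m}|lborel. f x) + (LINT x:{m..c}|lborel. f x)"
proof -
  have "{a..c} = {a..m} \<union> {m..c}" using assms by auto
  moreover have "(LINT x:{a..m} \<union> {m..c}|lborel. f x) = (LINT x:{a..m}|lborel. f x) + (LINT x:{m..c}|lborel. f x)"
  proof (rule set_integral_Un_AE)
    show "AE x in lborel. \<not> (x \<in> {a..m} \<and> x \<in> {m..c})"
      using AE_lborel_singleton[of m] by eventually_elim auto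
    show "set_integrable lborel {a..m} f" "set_integrable lborel {m..c} f"
      using assms by (auto intro: set_integrable_subset)
  qed auto
  ultimately show ?thesis by simp
qed

lemma set_integral_Icc_mono_domain:
  fixes f :: "real \<Rightarrow> real"
  assumes "set_integrable lborel {a..c} f" "\<And>x. x \<in> {a..c} \<Longrightarrow> 0 \<le> f x"
    and "a \<le> a'" "a' \<le> c'" "c' \<le> c"
  shows "(LINT x:{a'..c'}|lborel. f x) \<le> (LINT x:{a..c}|lborel. f x)"
proof -
  have "(LINT x:{a..c}|lborel. f x) = (LINT x:{a..a'}|lborel. f x) + (LINT x:{a'..c}|lborel. f x)"
    using assms by (intro set_integral_Icc_split) auto
  moreover have "(LINT x:{a'..c}|lborel. f x) = (LINT x:{a'..c'}|lborel. f x) + (LINT x:{c'..c}|lborel. f x)"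
    using assms by (intro set_integral_Icc_split) (auto intro: set_integrable_subset)
  moreover have "0 \<le> (LINT x:{a..a'}|lborel. f x)" "0 \<le> (LINT x:{c'..c}|lborel. f x)"
    using assms by (auto intro!: set_integral_nonneg)
  ultimately show ?thesis by linarith
qed

lemma set_integral_Ico_eq_Icc:
  fixes f :: "real \<Rightarrow> real"
  shows "(LINT x:{a..<c}|lborel. f x) = (LINT x:{a..c}|lborel. f x)"
  by (rule set_integral_discrete_difference[where X="{c}"]) auto

lemma set_integral_abs_squared_le:
  fixes f :: "real \<Rightarrow> real"
  assumes f: "set_integrable lborel {a..c} f" and f2: "set_integrable lborel {a..c} (\<lambda>x. (f x)\<^sup>2)"
    and "a \<le> c"
  shows "(LINT x:{a..c}|lborel. \<bar>f x\<bar>)\<^sup>2 \<le> (c - a) * (LINT x:{a..c}|lborel. (f x)\<^sup>2)"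
proof (cases "a = c")
  case True
  then show ?thesis by simp
next
  case False
  define W where "W = (LINT x:{a..c}|lborel. \<bar>f x\<bar>)"
  have ac: "c - a > 0" using False \<open>a \<le> c\<close> by simp
  have const: "set_integrable lborel {a..c} (\<lambda>x. W\<^sup>2)"
    by (rule borel_integrable_atLeastAtMost') simp
  have "2 * (c - a) * W * W = (LINT x:{a..c}|lborel. 2 * (c - a) * W * \<bar>f x\<bar>)"
    unfolding W_def by simp
  also have "\<dots> \<le> (LINT x:{a..c}|lborel. (c - a)\<^sup>2 * (f x)\<^sup>2 + W\<^sup>2)"
  proof (rule set_integral_mono)
    show "set_integrable lborel {a..c} (\<lambda>x. 2 * (c - a) * W * \<bar>f x\<bar>)"
      using set_integrable_abs[OF f] by simp
    show "set_integrable lborel {a..c} (\<lambda>x. (c - a)\<^sup>2 * (f x)\<^sup>2 + W\<^sup>2)"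
      using f2 const by (intro set_integral_add) auto
    fix x
    have "0 \<le> ((c - a) * \<bar>f x\<bar> - W)\<^sup>2" by simp
    then show "2 * (c - a) * W * \<bar>f x\<bar> \<le> (c - a)\<^sup>2 * (f x)\<^sup>2 + W\<^sup>2"
      by (simp add: power2_eq_square algebra_simps)
  qed
  also have "\<dots> = (c - a)\<^sup>2 * (LINT x:{a..c}|lborel. (f x)\<^sup>2) + (c - a) * W\<^sup>2"
    using f2 const \<open>a \<le> c\<close> by (subst set_integral_add) (auto simp: set_integral_const)
  finally have "(c - a) * W\<^sup>2 \<le> (c - a) * ((c - a) * (LINT x:{a..c}|lborel. (f x)\<^sup>2))"
    by (simp add: power2_eq_square algebra_simps)
  then show ?thesis using ac unfolding W_def by simp
qed

lemma set_integrable_continuous_mult: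
  fixes g f :: "real \<Rightarrow> real"
  assumes g: "continuous_on UNIV g" and f: "f \<in> borel_measurable lborel" "set_integrable lborel {a..c} f"
  shows "set_integrable lborel {a..c} (\<lambda>x. g x * f x)"
proof -
  have "bounded (g ` {a..c})"
    using g by (intro compact_imp_bounded compact_continuous_image) (auto intro: continuous_on_subset)
  then obtain M where M: "\<And>x. x \<in> {a..c} \<Longrightarrow> \<bar>g x\<bar> \<le> M"
    unfolding bounded_iff by force
  show ?thesis
  proof (rule set_integrable_bound)
    show "set_integrable lborel {a..c} (\<lambda>x. M * \<bar>f x\<bar>)"
      using set_integrable_abs[OF f(2)] by simp
    show "set_borel_measurable lborel {a..c} (\<lambda>x. g x * f x)"
      using borel_measurable_continuous_onI[OF g] f(1) unfolding set_borel_measurable_def by measurable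
    show "AE x in lborel. x \<in> {a..c} \<longrightarrow> norm (g x * f x) \<le> norm (M * \<bar>f x\<bar>)"
      using M by (intro AE_I2) (force simp: abs_mult intro!: mult_right_mono)
  qed
qed

lemma set_integral_weighted_le:
  fixes b f :: "real \<Rightarrow> real"
  assumes "a \<le> c" and b: "\<And>x. x \<in> {a..c} \<Longrightarrow> 0 \<le> b x" "set_integrable lborel {a..c} b"
    and f: "set_integrable lborel {a..c} f" and bf: "set_integrable lborel {a..c} (\<lambda>x. b x * f x)"
    and osc: "\<And>x y. x \<in> {a..c} \<Longrightarrow> y \<in> {a..c} \<Longrightarrow> f x \<le> f y + K"
  shows "(c - a) * (LINT x:{a..c}|lborel. b x * f x)
           \<le> (LINT x:{a..c}|lborel. b x) * ((LINT x:{a..c}|lborel. f x) + (c - a) * K)"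
proof -
  define B where "B = (LINT x:{a..c}|lborel. b x)"
  have const: "set_integrable lborel {a..c} (\<lambda>x. C)" for C :: real
    by (rule borel_integrable_atLeastAtMost') simp
  have pointwise: "(LINT x:{a..c}|lborel. b x * f x) \<le> B * f y + B * K" if y: "y \<in> {a..c}" for y
  proof -
    have "(LINT x:{a..c}|lborel. b x * f x) \<le> (LINT x:{a..c}|lborel. b x * (f y + K))"
      using osc[OF _ y] b by (intro set_integral_mono[OF bf]) (auto intro: mult_left_mono)
    then show ?thesis unfolding B_def using b(2) by (simp add: algebra_simps)
  qed
  have "(c - a) * (LINT x:{a..c}|lborel. b x * f x) = (LINT y:{a..c}|lborel. (LINT x:{a..c}|lborel. b x * f x))"
    using \<open>a \<le> c\<close> by (simp add: set_integral_const)
  also have "\<dots> \<le> (LINT y:{a..c}|lborel. B * f y + B * K)"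
    using pointwise f const by (intro set_integral_mono) auto
  also have "\<dots> = B * ((LINT x:{a..c}|lborel. f x) + (c - a) * K)"
    using f const \<open>a \<le> c\<close> by (subst set_integral_add) (auto simp: set_integral_const algebra_simps)
  finally show ?thesis unfolding B_def .
qed

context
  fixes \<psi> d :: "real \<Rightarrow> real"
  assumes H1: "H1_loc \<psi> d" and pos: "\<And>x. \<psi> x > 0"
begin

lemma H1_loc_integrable:
  shows "set_integrable lborel {a..c} d" "set_integrable lborel {a..c} (\<lambda>x. (d x)\<^sup>2)"
    "set_integrable lborel {a..c} (\<lambda>x. (\<psi> x)\<^sup>2)" "set_integrable lborel {a..c} (\<lambda>x. \<bar>d x\<bar>)"
  using H1 set_integrable_abs unfolding H1_loc_def by blast+

lemma H1_loc_deriv_measurable [measurable]: "d \<in> borel_measurable lborel"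
  using H1_loc_integrable(1) by (rule borel_measurable_if_set_integrable_Icc)

lemma H1_loc_measurable [measurable]: "\<psi> \<in> borel_measurable lborel"
proof -
  have "(\<lambda>x. sqrt ((\<psi> x)\<^sup>2)) \<in> borel_measurable lborel"
    using borel_measurable_if_set_integrable_Icc[OF H1_loc_integrable(3)] by measurable
  moreover have "(\<lambda>x. sqrt ((\<psi> x)\<^sup>2)) = \<psi>" using pos by (auto simp: less_imp_le)
  ultimately show ?thesis by simp
qed

lemma H1_loc_integrable_product: "set_integrable lborel {a..c} (\<lambda>x. 2 * \<psi> x * \<bar>d x\<bar>)"
proof (rule set_integrable_bound)
  show "set_integrable lborel {a..c} (\<lambda>x. (\<psi> x)\<^sup>2 + (d x)\<^sup>2)"
    using H1_loc_integrable by (intro set_integral_add)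
  show "set_borel_measurable lborel {a..c} (\<lambda>x. 2 * \<psi> x * \<bar>d x\<bar>)"
    unfolding set_borel_measurable_def by measurable
  have "2 * \<psi> x * \<bar>d x\<bar> \<le> (\<psi> x)\<^sup>2 + (d x)\<^sup>2" for x
    using sum_squares_bound[of "\<psi> x" "\<bar>d x\<bar>"] by (simp add: power2_eq_square)
  then show "AE x in lborel. x \<in> {a..c} \<longrightarrow> norm (2 * \<psi> x * \<bar>d x\<bar>) \<le> norm ((\<psi> x)\<^sup>2 + (d x)\<^sup>2)"
    using pos by (intro AE_I2) (simp add: abs_mult less_imp_le)
qed

lemma H1_loc_abs_diff_le:
  assumes "a \<le> c"
  shows "\<bar>\<psi> c - \<psi> a\<bar> \<le> (LINT x:{a..c}|lborel. \<bar>d x\<bar>)"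
proof -
  have "\<psi> c - \<psi> a = (LINT x:{a..c}|lborel. d x)" using H1 assms unfolding H1_loc_def by blast
  moreover have "\<bar>LINT x:{a..c}|lborel. d x\<bar> \<le> (LINT x:{a..c}|lborel. \<bar>d x\<bar>)"
    using set_integral_norm_bound[OF H1_loc_integrable(1)] by simp
  ultimately show ?thesis by simp
qed

lemma H1_loc_sq_diff_le_step:
  assumes "a \<le> c"
  shows "\<bar>(\<psi> c)\<^sup>2 - (\<psi> a)\<^sup>2\<bar> \<le> (LINT x:{a..c}|lborel. 2 * \<psi> x * \<bar>d x\<bar>)
           + 2 * (c - a) * (LINT x:{a..c}|lborel. (d x)\<^sup>2)"
proof -
  define W where "W = (LINT x:{a..c}|lborel. \<bar>d x\<bar>)"
  have W_bound: "\<bar>\<psi> t - \<psi> s\<bar> \<le> W" if "a \<le> s" "s \<le> t" "t \<le> c" for s t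
    using that H1_loc_abs_diff_le[of s t] set_integral_Icc_mono_domain[OF H1_loc_integrable(4), of a c s t]
    unfolding W_def by simp
  \<comment> \<open>Trading the endpoint values for \<psi>(t) is what produces the error term 2W^2.\<close>
  have ends_le: "\<psi> a + \<psi> c \<le> 2 * \<psi> t + 2 * W" if "t \<in> {a..c}" for t
    using W_bound[of a t] W_bound[of t c] that by auto
  have "(\<psi> c)\<^sup>2 - (\<psi> a)\<^sup>2 = (\<psi> c - \<psi> a) * (\<psi> a + \<psi> c)"
    by (simp add: power2_eq_square algebra_simps)
  then have "\<bar>(\<psi> c)\<^sup>2 - (\<psi> a)\<^sup>2\<bar> = \<bar>\<psi> c - \<psi> a\<bar> * (\<psi> a + \<psi> c)"
    using pos[of a] pos[of c] by (simp add: abs_mult)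
  also have "\<dots> \<le> W * (\<psi> a + \<psi> c)"
    using W_bound[of a c] assms pos[of a] pos[of c] by (intro mult_right_mono) auto
  also have "\<dots> = (LINT x:{a..c}|lborel. \<bar>d x\<bar> * (\<psi> a + \<psi> c))"
    unfolding W_def by simp
  also have "\<dots> \<le> (LINT x:{a..c}|lborel. 2 * \<psi> x * \<bar>d x\<bar> + 2 * W * \<bar>d x\<bar>)"
  proof (rule set_integral_mono)
    show "set_integrable lborel {a..c} (\<lambda>x. \<bar>d x\<bar> * (\<psi> a + \<psi> c))"
      using H1_loc_integrable(4) by simp
    show "set_integrable lborel {a..c} (\<lambda>x. 2 * \<psi> x * \<bar>d x\<bar> + 2 * W * \<bar>d x\<bar>)"
      using H1_loc_integrable_product H1_loc_integrable(4) by (intro set_integral_add) auto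
    fix x assume "x \<in> {a..c}"
    then have "\<bar>d x\<bar> * (\<psi> a + \<psi> c) \<le> \<bar>d x\<bar> * (2 * \<psi> x + 2 * W)"
      using ends_le by (intro mult_left_mono) auto
    then show "\<bar>d x\<bar> * (\<psi> a + \<psi> c) \<le> 2 * \<psi> x * \<bar>d x\<bar> + 2 * W * \<bar>d x\<bar>"
      by (simp add: algebra_simps)
  qed
  also have "\<dots> = (LINT x:{a..c}|lborel. 2 * \<psi> x * \<bar>d x\<bar>) + 2 * W\<^sup>2"
    using H1_loc_integrable_product H1_loc_integrable(4) unfolding W_def
    by (subst set_integral_add) (auto simp: power2_eq_square)
  also have "\<dots> \<le> (LINT x:{a..c}|lborel. 2 * \<psi> x * \<bar>d x\<bar>) + 2 * (c - a) * (LINT x:{a..c}|lborel. (d x)\<^sup>2)"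
    using set_integral_abs_squared_le[OF H1_loc_integrable(1,2) assms] unfolding W_def by linarith
  finally show ?thesis .
qed

lemma H1_loc_sq_diff_le_mesh:
  assumes "h \<ge> 0"
  shows "\<bar>(\<psi> (a + real k * h))\<^sup>2 - (\<psi> a)\<^sup>2\<bar> \<le> (LINT x:{a..a + real k * h}|lborel. 2 * \<psi> x * \<bar>d x\<bar>)
           + 2 * h * (LINT x:{a..a + real k * h}|lborel. (d x)\<^sup>2)"
proof (induction k)
  case 0
  then show ?case by simp
next
  case (Suc k)
  define m where "m = a + real k * h"
  define c where "c = a + real (Suc k) * h"
  have mc: "a \<le> m" "m \<le> c" "c - m = h"
    using assms unfolding m_def c_def by (auto simp: algebra_simps)
  have "\<bar>(\<psi> c)\<^sup>2 - (\<psi> a)\<^sup>2\<bar> \<le> \<bar>(\<psi> m)\<^sup>2 - (\<psi> a)\<^sup>2\<bar> + \<bar>(\<psi> c)\<^sup>2 - (\<psi> m)\<^sup>2\<bar>"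
    by linarith
  also have "\<dots> \<le> ((LINT x:{a..m}|lborel. 2 * \<psi> x * \<bar>d x\<bar>) + 2 * h * (LINT x:{a..m}|lborel. (d x)\<^sup>2))
      + ((LINT x:{m..c}|lborel. 2 * \<psi> x * \<bar>d x\<bar>) + 2 * h * (LINT x:{m..c}|lborel. (d x)\<^sup>2))"
    using Suc.IH H1_loc_sq_diff_le_step[of m c] mc unfolding m_def by (intro add_mono) auto
  also have "\<dots> = (LINT x:{a..c}|lborel. 2 * \<psi> x * \<bar>d x\<bar>) + 2 * h * (LINT x:{a..c}|lborel. (d x)\<^sup>2)"
    using set_integral_Icc_split[OF H1_loc_integrable_product mc(1,2)]
      set_integral_Icc_split[OF H1_loc_integrable(2) mc(1,2)]
    by (simp add: algebra_simps)
  finally show ?case unfolding c_def .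
qed

lemma H1_loc_sq_diff_le_subinterval:
  assumes "a \<le> p" "p \<le> q" "q \<le> c" "n > 0"
  shows "\<bar>(\<psi> q)\<^sup>2 - (\<psi> p)\<^sup>2\<bar> \<le> (LINT t:{a..c}|lborel. 2 * \<psi> t * \<bar>d t\<bar>)
           + 2 * ((c - a) / real n) * (LINT t:{a..c}|lborel. (d t)\<^sup>2)"
proof -
  define h where "h = (q - p) / real n"
  have h: "0 \<le> h" "p + real n * h = q" "h \<le> (c - a) / real n"
    using assms unfolding h_def by (auto simp: divide_right_mono)
  have "\<bar>(\<psi> q)\<^sup>2 - (\<psi> p)\<^sup>2\<bar> \<le> (LINT t:{p..q}|lborel. 2 * \<psi> t * \<bar>d t\<bar>)
      + 2 * h * (LINT t:{p..q}|lborel. (d t)\<^sup>2)"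
    using H1_loc_sq_diff_le_mesh[OF h(1), of p n] h(2) by simp
  also have "\<dots> \<le> (LINT t:{a..c}|lborel. 2 * \<psi> t * \<bar>d t\<bar>)
      + 2 * ((c - a) / real n) * (LINT t:{a..c}|lborel. (d t)\<^sup>2)"
  proof (rule add_mono)
    show "(LINT t:{p..q}|lborel. 2 * \<psi> t * \<bar>d t\<bar>) \<le> (LINT t:{a..c}|lborel. 2 * \<psi> t * \<bar>d t\<bar>)"
      using assms pos
      by (intro set_integral_Icc_mono_domain[OF H1_loc_integrable_product]) (auto simp: less_imp_le)
    have "(LINT t:{p..q}|lborel. (d t)\<^sup>2) \<le> (LINT t:{a..c}|lborel. (d t)\<^sup>2)"
      using assms by (intro set_integral_Icc_mono_domain[OF H1_loc_integrable(2)]) auto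
    then show "2 * h * (LINT t:{p..q}|lborel. (d t)\<^sup>2) \<le> 2 * ((c - a) / real n) * (LINT t:{a..c}|lborel. (d t)\<^sup>2)"
      using h assms by (intro mult_mono) (auto intro: set_integral_nonneg)
  qed
  finally show ?thesis .
qed

lemma H1_loc_sq_le_sq_add:
  assumes "x \<in> {a..c}" "y \<in> {a..c}"
  shows "(\<psi> x)\<^sup>2 \<le> (\<psi> y)\<^sup>2 + (LINT t:{a..c}|lborel. 2 * \<psi> t * \<bar>d t\<bar>)"
proof -
  define J where "J = (LINT t:{a..c}|lborel. 2 * \<psi> t * \<bar>d t\<bar>)"
  define B where "B = (LINT t:{a..c}|lborel. (d t)\<^sup>2)"
  have mesh: "\<bar>(\<psi> q)\<^sup>2 - (\<psi> p)\<^sup>2\<bar> \<le> J + 2 * ((c - a) / real n) * B"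
    if "a \<le> p" "p \<le> q" "q \<le> c" "n > 0" for p q n
    using H1_loc_sq_diff_le_subinterval[OF that] unfolding J_def B_def .
  have "(\<psi> x)\<^sup>2 \<le> (\<psi> y)\<^sup>2 + J + e" if "e > 0" for e
  proof -
    have "0 \<le> B" unfolding B_def by (rule set_integral_nonneg) simp
    then have "0 \<le> 2 * (c - a) * B / e" using assms \<open>e > 0\<close> by simp
    moreover obtain n :: nat where n: "2 * (c - a) * B / e < real n"
      using reals_Archimedean2 by blast
    ultimately have "n > 0" by linarith
    have "2 * ((c - a) / real n) * B \<le> e"
      using n \<open>n > 0\<close> \<open>e > 0\<close> by (simp add: field_simps)
    moreover have "(\<psi> x)\<^sup>2 - (\<psi> y)\<^sup>2 \<le> J + 2 * ((c - a) / real n) * B"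
    proof (cases "x \<le> y")
      case True
      then have "- ((\<psi> y)\<^sup>2 - (\<psi> x)\<^sup>2) \<le> J + 2 * ((c - a) / real n) * B"
        using assms \<open>n > 0\<close> by (intro abs_le_D2[OF mesh[of x y n]]) auto
      then show ?thesis by simp
    next
      case False
      then show ?thesis using assms \<open>n > 0\<close> by (intro abs_le_D1[OF mesh[of y x n]]) auto
    qed
    ultimately show ?thesis by simp
  qed
  then show ?thesis unfolding J_def by (rule field_le_epsilon) (simp add: add.assoc)
qed

lemma H1_loc_scaled_product_le:
  "t * (LINT x:{a..c}|lborel. 2 * \<psi> x * \<bar>d x\<bar>)
     \<le> t\<^sup>2 * (LINT x:{a..c}|lborel. (\<psi> x)\<^sup>2) + (LINT x:{a..c}|lborel. (d x)\<^sup>2)"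
proof -
  have "t * (LINT x:{a..c}|lborel. 2 * \<psi> x * \<bar>d x\<bar>) = (LINT x:{a..c}|lborel. t * (2 * \<psi> x * \<bar>d x\<bar>))"
    by simp
  also have "\<dots> \<le> (LINT x:{a..c}|lborel. t\<^sup>2 * (\<psi> x)\<^sup>2 + (d x)\<^sup>2)"
  proof (rule set_integral_mono)
    show "set_integrable lborel {a..c} (\<lambda>x. t * (2 * \<psi> x * \<bar>d x\<bar>))"
      using H1_loc_integrable_product by simp
    show "set_integrable lborel {a..c} (\<lambda>x. t\<^sup>2 * (\<psi> x)\<^sup>2 + (d x)\<^sup>2)"
      using H1_loc_integrable by (intro set_integral_add) auto
    fix x
    have "0 \<le> (t * \<psi> x - \<bar>d x\<bar>)\<^sup>2" by simp
    then show "t * (2 * \<psi> x * \<bar>d x\<bar>) \<le> t\<^sup>2 * (\<psi> x)\<^sup>2 + (d x)\<^sup>2"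
      by (simp add: power2_eq_square algebra_simps)
  qed
  also have "\<dots> = t\<^sup>2 * (LINT x:{a..c}|lborel. (\<psi> x)\<^sup>2) + (LINT x:{a..c}|lborel. (d x)\<^sup>2)"
    using H1_loc_integrable by (subst set_integral_add) auto
  finally show ?thesis .
qed

end

theorem mainTheorem14:
  fixes L \<alpha> :: real and b \<psi> d\<psi> :: "real \<Rightarrow> real"
  assumes "L > 0" and "\<alpha> > 0"
    and "b \<in> Lambda L \<alpha>"
    and "E_L L \<psi> d\<psi>"
  shows "(LINT x:{0..<L}|lborel. (d\<psi> x)\<^sup>2) - (LINT x:{0..<L}|lborel. b x * (\<psi> x)\<^sup>2)
           \<ge> - (\<alpha> + \<alpha>\<^sup>2 * L\<^sup>2) * (LINT x:{0..<L}|lborel. (\<psi> x)\<^sup>2)"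
proof -
  have H1: "H1_loc \<psi> d\<psi>" and pos: "\<And>x. \<psi> x > 0"
    using assms(4) unfolding E_L_def H1_per_def by auto
  have b_cont: "continuous_on UNIV b" and b_nonneg: "\<And>x. b x \<ge> 0"
    and b_mean: "(LINT x:{0..L}|lborel. b x) = \<alpha> * L"
    using assms(3) C1_differentiable_imp_continuous_on unfolding Lambda_def by auto
  define A where "A = (LINT x:{0..L}|lborel. (\<psi> x)\<^sup>2)"
  define B where "B = (LINT x:{0..L}|lborel. (d\<psi> x)\<^sup>2)"
  define J where "J = (LINT x:{0..L}|lborel. 2 * \<psi> x * \<bar>d\<psi> x\<bar>)"
  have b_int: "set_integrable lborel {0..L} b"
    using b_cont by (intro borel_integrable_atLeastAtMost') (auto intro: continuous_on_subset)
  have b_psi_int: "set_integrable lborel {0..L} (\<lambda>x. b x * (\<psi> x)\<^sup>2)"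
    using set_integrable_continuous_mult[OF b_cont borel_measurable_power[OF H1_loc_measurable[OF H1 pos]]
        H1_loc_integrable(3)[OF H1 pos]] .
  have "L * (LINT x:{0..L}|lborel. b x * (\<psi> x)\<^sup>2) \<le> \<alpha> * L * (A + L * J)"
    using set_integral_weighted_le[OF _ _ b_int H1_loc_integrable(3)[OF H1 pos] b_psi_int
        H1_loc_sq_le_sq_add[OF H1 pos]] assms(1) b_nonneg b_mean
    unfolding A_def J_def by simp
  also have "\<dots> = L * (\<alpha> * A + \<alpha> * L * J)"
    by (simp add: algebra_simps)
  finally have "(LINT x:{0..L}|lborel. b x * (\<psi> x)\<^sup>2) \<le> \<alpha> * A + \<alpha> * L * J"
    using assms(1) by simp
  moreover have "\<alpha> * L * J \<le> (\<alpha> * L)\<^sup>2 * A + B"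
    unfolding A_def B_def J_def by (rule H1_loc_scaled_product_le[OF H1 pos])
  ultimately show ?thesis
    unfolding set_integral_Ico_eq_Icc A_def B_def by (simp add: algebra_simps power_mult_distrib)
qed

end
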